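(* Let $A$ be a finite alphabet, $\gamma\in(0,1]$, and let $q_\gamma$ be the map associated with the shuffle Hopf algebra $\mathcal H^A_{\sqcup\!\sqcup}$ with its basis of words. There exists a constant $C_\gamma\ge1$ depending only on $\gamma$ such that for every nonempty word $w\in A^*$, $$|q_\gamma(w)|\le\frac{C_\gamma^{|w|-1}}{(|w|!)^{\gamma}}.$$
   Context: $\mathcal H^A_{\sqcup\!\sqcup}$ is the vector space with basis the set $A^*$ of words on $A$ (including the empty word $\mathbf 1$), graded by word length $|w|$, with shuffle product ($\mathbf 1\sqcup\!\sqcup w=w\sqcup\!\sqcup\mathbf 1=w$, $(av)\sqcup\!\sqcup(bw)=a(v\sqcup\!\sqcup bw)+b(av\sqcup\!\sqcup w)$ for letters $a,b$) and deconcatenation coproduct $\Delta(w)=\sum_{uv=w}u\otimes v$. Its inverse-factorial character is $q(w)=1/|w|!$. Let $N=\lfloor1/\gamma\rfloor$. The linear map $q_\gamma$ is defined on words by $q_\gamma(w)=q(w)=1/|w|!$ if $|w|\le N$ and recursively $q_\gamma(w)=\frac{1}{2^{\gamma|w|}-2}\sum_{uv=w,\ u,v\ne\mathbf 1}q_\gamma(u)q_\gamma(v)$ if $|w|\ge N+1$. *)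

theory Defs
  imports Complex_Main
begin

text \<open>Words over the alphabet are lists; the empty word is []. The sum over
  deconcatenations w = uv with u, v nonempty is indexed by the split point k.\<close>

function q_gamma :: "real \<Rightarrow> 'a list \<Rightarrow> real" where
  "q_gamma \<gamma> w =
     (if length w \<le> nat \<lfloor>1 / \<gamma>\<rfloor> then 1 / fact (length w)
      else (1 / (2 powr (\<gamma> * real (length w)) - 2)) *
           (\<Sum>k\<in>{1..<length w}. q_gamma \<gamma> (take k w) * q_gamma \<gamma> (drop k w)))"
  by auto
termination
  by (relation "measure (\<lambda>(\<gamma>, w). length w)") auto

end

theory Submission
  imports Defs "HOL-Analysis.Convex" "HOL-Analysis.Summation_Tests"
begin

text \<open>The value of \<open>q_gamma\<close> depends only on the length \<open>n\<close> of the word. One proves the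
  stronger bound \<open>n * (n!)^\<gamma> * q(n) \<le> C^(n-1)\<close> by strong induction. In the recursive case
  \<open>(n!)^\<gamma> = (n choose k)^\<gamma> (k!)^\<gamma> ((n-k)!)^\<gamma>\<close> and \<open>n / (k (n-k)) = 1/k + 1/(n-k)\<close>
  reduce everything to the estimate \<open>\<Sum>k. (n choose k)^\<gamma> / k = O(2^(\<gamma> n))\<close>. For \<open>\<gamma> < 1\<close>
  this is Young's inequality \<open>p^\<gamma> a^(1-\<gamma>) \<le> \<gamma> p + (1-\<gamma>) a\<close> with \<open>p = (n choose k) / 2^n\<close>
  and \<open>a = k^(-1/(1-\<gamma>))\<close>, a summable sequence. The prefactor \<open>1 / (2^(\<gamma> n) - 2)\<close> is
  \<open>O(2^(-\<gamma> n))\<close> because the recursion only starts at \<open>n > \<lfloor>1/\<gamma>\<rfloor>\<close>, where \<open>\<gamma> n > 1\<close>.\<close>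

function q_gamma_len :: "real \<Rightarrow> nat \<Rightarrow> real" where
  "q_gamma_len \<gamma> n =
     (if n \<le> nat \<lfloor>1 / \<gamma>\<rfloor> then 1 / fact n
      else (1 / (2 powr (\<gamma> * real n) - 2)) *
           (\<Sum>k\<in>{1..<n}. q_gamma_len \<gamma> k * q_gamma_len \<gamma> (n - k)))"
  by auto
termination by (relation "measure (\<lambda>(\<gamma>, n). n)") auto

declare q_gamma_len.simps[simp del] q_gamma.simps[simp del]

lemma q_gamma_eq_q_gamma_len: "q_gamma \<gamma> w = q_gamma_len \<gamma> (length w)"
proof (induction "length w" arbitrary: w rule: less_induct)
  case less
  have "(\<Sum>k\<in>{1..<length w}. q_gamma \<gamma> (take k w) * q_gamma \<gamma> (drop k w))
      = (\<Sum>k\<in>{1..<length w}. q_gamma_len \<gamma> k * q_gamma_len \<gamma> (length w - k))"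
    by (rule sum.cong) (use less in auto)
  then show ?case
    by (subst q_gamma.simps, subst q_gamma_len.simps) simp
qed

lemma sum_binomial_proper_le: "(\<Sum>k\<in>{1..<n}. real (n choose k)) \<le> 2 ^ n"
proof -
  have "(\<Sum>k\<in>{1..<n}. real (n choose k)) \<le> (\<Sum>k\<le>n. real (n choose k))"
    by (rule sum_mono2) auto
  also have "\<dots> = 2 ^ n"
    by (metis choose_row_sum of_nat_numeral of_nat_power of_nat_sum)
  finally show ?thesis .
qed

lemma sum_binomial_powr_div_le:
  fixes \<gamma> :: real
  assumes "0 < \<gamma>" "\<gamma> < 1"
  defines "S \<equiv> (\<Sum>k. real k powr (- (1 / (1 - \<gamma>))))"
  shows "(\<Sum>k\<in>{1..<n}. real (n choose k) powr \<gamma> / real k) \<le> (\<gamma> + (1 - \<gamma>) * S) * 2 powr (\<gamma> * real n)"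
proof -
  define r where "r = 1 / (1 - \<gamma>)"
  have "r > 1" using assms unfolding r_def by (simp add: field_simps)
  then have summable: "summable (\<lambda>k::nat. real k powr (- r))"
    by (simp add: summable_real_powr_iff)
  have S_eq: "S = (\<Sum>k. real k powr (- r))"
    unfolding S_def r_def ..
  have term_le: "real (n choose k) powr \<gamma> / real k \<le>
      2 powr (\<gamma> * real n) * (\<gamma> * (real (n choose k) / 2 ^ n) + (1 - \<gamma>) * real k powr (- r))"
    if k: "k \<in> {1..<n}" for k
  proof -
    define p where "p = real (n choose k) / 2 ^ n"
    define a where "a = real k powr (- r)"
    have "p > 0" "a > 0" unfolding p_def a_def using k by auto
    then have young: "p powr \<gamma> * a powr (1 - \<gamma>) \<le> \<gamma> * p + (1 - \<gamma>) * a"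
      using assms by (intro Youngs_inequality_0) auto
    have "a powr (1 - \<gamma>) = 1 / real k"
    proof -
      have "a powr (1 - \<gamma>) = real k powr (- r * (1 - \<gamma>))"
        unfolding a_def by (simp add: powr_powr)
      also have "- r * (1 - \<gamma>) = -1"
        unfolding r_def using assms by simp
      finally show ?thesis using k by (simp add: powr_minus_divide)
    qed
    moreover have "p powr \<gamma> = real (n choose k) powr \<gamma> / 2 powr (\<gamma> * real n)"
      unfolding p_def by (simp add: powr_divide powr_realpow[symmetric] powr_powr mult.commute)
    ultimately have "real (n choose k) powr \<gamma> / real k = 2 powr (\<gamma> * real n) * (p powr \<gamma> * a powr (1 - \<gamma>))"
      by simp
    also have "\<dots> \<le> 2 powr (\<gamma> * real n) * (\<gamma> * p + (1 - \<gamma>) * a)"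
      using young by (intro mult_left_mono) auto
    finally show ?thesis unfolding p_def a_def .
  qed
  have "(\<Sum>k\<in>{1..<n}. real (n choose k) powr \<gamma> / real k) \<le>
      (\<Sum>k\<in>{1..<n}. 2 powr (\<gamma> * real n) *
        (\<gamma> * (real (n choose k) / 2 ^ n) + (1 - \<gamma>) * real k powr (- r)))"
    by (rule sum_mono) (rule term_le)
  also have "\<dots> = 2 powr (\<gamma> * real n) * (\<gamma> * ((\<Sum>k\<in>{1..<n}. real (n choose k)) / 2 ^ n)
      + (1 - \<gamma>) * (\<Sum>k\<in>{1..<n}. real k powr (- r)))"
    by (simp add: sum_distrib_left sum.distrib sum_divide_distrib distrib_left)
  also have "\<dots> \<le> 2 powr (\<gamma> * real n) * (\<gamma> * 1 + (1 - \<gamma>) * S)"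
  proof -
    have "(\<Sum>k\<in>{1..<n}. real (n choose k)) / 2 ^ n \<le> 1"
      using sum_binomial_proper_le[of n] by simp
    moreover have "(\<Sum>k\<in>{1..<n}. real k powr (- r)) \<le> S"
      unfolding S_eq by (rule sum_le_suminf[OF summable]) auto
    ultimately show ?thesis
      using assms by (intro mult_left_mono add_mono) auto
  qed
  finally show ?thesis by (simp add: mult.commute)
qed

lemma sum_binomial_powr_div_bigo:
  fixes \<gamma> :: real
  assumes "0 < \<gamma>" "\<gamma> \<le> 1"
  shows "\<exists>K\<ge>0. \<forall>n. (\<Sum>k\<in>{1..<n}. real (n choose k) powr \<gamma> / real k) \<le> K * 2 powr (\<gamma> * real n)"
proof (cases "\<gamma> = 1")
  case True
  have "(\<Sum>k\<in>{1..<n}. real (n choose k) powr \<gamma> / real k) \<le> 1 * 2 powr (\<gamma> * real n)" for n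
  proof -
    have "(\<Sum>k\<in>{1..<n}. real (n choose k) powr \<gamma> / real k) \<le> (\<Sum>k\<in>{1..<n}. real (n choose k))"
      using True by (intro sum_mono) (auto simp: divide_le_eq)
    also have "\<dots> \<le> 2 ^ n" by (rule sum_binomial_proper_le)
    finally show ?thesis using True by (simp add: powr_realpow)
  qed
  then show ?thesis by (intro exI[of _ 1]) auto
next
  case False
  define S where "S = (\<Sum>k. real k powr (- (1 / (1 - \<gamma>))))"
  have "1 / (1 - \<gamma>) > 1" using assms False by (simp add: field_simps)
  then have "S \<ge> 0"
    unfolding S_def by (intro suminf_nonneg) (auto simp: summable_real_powr_iff)
  then have "\<gamma> + (1 - \<gamma>) * S \<ge> 0" using assms by simp
  then show ?thesis
    using sum_binomial_powr_div_le[of \<gamma>] assms False unfolding S_def by fastforce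
qed

lemma sum_binomial_powr_harmonic_le:
  fixes K \<gamma> :: real
  assumes "\<forall>n. (\<Sum>k\<in>{1..<n}. real (n choose k) powr \<gamma> / real k) \<le> K * 2 powr (\<gamma> * real n)"
  shows "(\<Sum>k\<in>{1..<n}. real (n choose k) powr \<gamma> * (real n / (real k * real (n - k))))
     \<le> 2 * K * 2 powr (\<gamma> * real n)"
proof -
  have "(\<Sum>k\<in>{1..<n}. real (n choose k) powr \<gamma> * (real n / (real k * real (n - k))))
      = (\<Sum>k\<in>{1..<n}. real (n choose k) powr \<gamma> / real k) +
        (\<Sum>k\<in>{1..<n}. real (n choose (n - k)) powr \<gamma> / real (n - k))"
    unfolding sum.distrib[symmetric]
  proof (rule sum.cong)
    fix k assume k: "k \<in> {1..<n}"
    then have "real n / (real k * real (n - k)) = 1 / real k + 1 / real (n - k)"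
      by (simp add: field_simps of_nat_diff)
    moreover have "n choose (n - k) = n choose k"
      using k by (simp add: binomial_symmetric[symmetric])
    ultimately show "real (n choose k) powr \<gamma> * (real n / (real k * real (n - k))) =
        real (n choose k) powr \<gamma> / real k + real (n choose (n - k)) powr \<gamma> / real (n - k)"
      by (simp add: distrib_left divide_inverse)
  qed simp
  also have "(\<Sum>k\<in>{1..<n}. real (n choose (n - k)) powr \<gamma> / real (n - k))
      = (\<Sum>k\<in>{1..<n}. real (n choose k) powr \<gamma> / real k)"
    by (rule sum.reindex_bij_witness[where i="\<lambda>k. n - k" and j="\<lambda>k. n - k"]) auto
  finally show ?thesis using assms by simp
qed

lemma fact_powr_binomial:
  assumes "k \<le> n"
  shows "(fact n :: real) powr \<gamma> = real (n choose k) powr \<gamma> * (fact k powr \<gamma> * fact (n - k) powr \<gamma>)"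
proof -
  have "(fact n :: real) = real (n choose k) * (fact k * fact (n - k))"
    using binomial_fact_lemma[OF assms] by (metis mult.commute of_nat_fact of_nat_mult)
  then show ?thesis by (simp add: powr_mult)
qed

lemma convolution_term_le:
  fixes C \<gamma> :: real
  assumes C: "C \<ge> 1" and k: "1 \<le> k" "k < n"
    and a: "0 \<le> a" "a * (fact k powr \<gamma> * real k) \<le> C ^ (k - 1)"
    and b: "0 \<le> b" "b * (fact (n - k) powr \<gamma> * real (n - k)) \<le> C ^ (n - k - 1)"
  shows "a * b * (fact n powr \<gamma> * real n)
    \<le> C ^ (n - 2) * (real (n choose k) powr \<gamma> * (real n / (real k * real (n - k))))"
proof -
  define wk where "wk = (fact k :: real) powr \<gamma> * real k"
  define wm where "wm = (fact (n - k) :: real) powr \<gamma> * real (n - k)"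
  have pos: "wk > 0" "wm > 0" unfolding wk_def wm_def using k by auto
  have "a * b * (wk * wm) = (a * wk) * (b * wm)" by simp
  also have "\<dots> \<le> C ^ (k - 1) * C ^ (n - k - 1)"
    using a b pos C unfolding wk_def wm_def by (intro mult_mono) auto
  also have "\<dots> = C ^ (n - 2)"
    using k by (simp add: power_add[symmetric])
  finally have ab: "a * b * (wk * wm) \<le> C ^ (n - 2)" .
  have "fact n powr \<gamma> * real n = real (n choose k) powr \<gamma> * (real n / (real k * real (n - k))) * (wk * wm)"
    using fact_powr_binomial[of k n \<gamma>] k pos unfolding wk_def wm_def by (simp add: field_simps)
  then have "a * b * (fact n powr \<gamma> * real n)
      = a * b * (wk * wm) * (real (n choose k) powr \<gamma> * (real n / (real k * real (n - k))))"
    by simp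
  also have "\<dots> \<le> C ^ (n - 2) * (real (n choose k) powr \<gamma> * (real n / (real k * real (n - k))))"
    using ab by (intro mult_right_mono) auto
  finally show ?thesis .
qed

lemma convolution_sum_le:
  fixes C K \<gamma> :: real and f :: "nat \<Rightarrow> real"
  assumes C: "C \<ge> 1"
    and K: "\<forall>n. (\<Sum>k\<in>{1..<n}. real (n choose k) powr \<gamma> / real k) \<le> K * 2 powr (\<gamma> * real n)"
    and f: "\<And>m. 1 \<le> m \<Longrightarrow> m < n \<Longrightarrow> 0 \<le> f m \<and> f m * (fact m powr \<gamma> * real m) \<le> C ^ (m - 1)"
  shows "(\<Sum>k\<in>{1..<n}. f k * f (n - k)) * (fact n powr \<gamma> * real n) \<le> C ^ (n - 2) * (2 * K * 2 powr (\<gamma> * real n))"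
proof -
  have "(\<Sum>k\<in>{1..<n}. f k * f (n - k)) * (fact n powr \<gamma> * real n)
      = (\<Sum>k\<in>{1..<n}. f k * f (n - k) * (fact n powr \<gamma> * real n))"
    by (simp add: sum_distrib_right)
  also have "\<dots> \<le> (\<Sum>k\<in>{1..<n}. C ^ (n - 2) * (real (n choose k) powr \<gamma> * (real n / (real k * real (n - k)))))"
  proof (rule sum_mono)
    fix k assume k: "k \<in> {1..<n}"
    show "f k * f (n - k) * (fact n powr \<gamma> * real n)
        \<le> C ^ (n - 2) * (real (n choose k) powr \<gamma> * (real n / (real k * real (n - k))))"
      by (rule convolution_term_le) (use C k f[of k] f[of "n - k"] in auto)
  qed
  also have "\<dots> = C ^ (n - 2) * (\<Sum>k\<in>{1..<n}. real (n choose k) powr \<gamma> * (real n / (real k * real (n - k))))"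
    by (simp add: sum_distrib_left)
  also have "\<dots> \<le> C ^ (n - 2) * (2 * K * 2 powr (\<gamma> * real n))"
    using C by (intro mult_left_mono sum_binomial_powr_harmonic_le[OF K]) auto
  finally show ?thesis .
qed

lemma two_powr_minus_two_ge:
  fixes \<gamma> :: real
  assumes "0 < \<gamma>"
  shows "\<exists>c>0. \<forall>n > nat \<lfloor>1 / \<gamma>\<rfloor>. c * 2 powr (\<gamma> * real n) \<le> 2 powr (\<gamma> * real n) - 2"
proof -
  define N where "N = nat \<lfloor>1 / \<gamma>\<rfloor>"
  have "1 / \<gamma> < real N + 1"
    unfolding N_def by linarith
  then have \<gamma>N: "\<gamma> * (real N + 1) > 1" using assms by (simp add: field_simps)
  define c where "c = 1 - 2 powr (1 - \<gamma> * (real N + 1))"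
  have "2 powr (1 - \<gamma> * (real N + 1)) < 2 powr 0"
    using \<gamma>N by (intro powr_less_mono) auto
  then have "c > 0" unfolding c_def by simp
  moreover have "c * 2 powr (\<gamma> * real n) \<le> 2 powr (\<gamma> * real n) - 2" if "n > N" for n
  proof -
    have "\<gamma> * real n \<ge> \<gamma> * (real N + 1)"
      using that assms by (intro mult_left_mono) auto
    then have "2 powr 1 \<le> 2 powr (\<gamma> * real n + (1 - \<gamma> * (real N + 1)))"
      by (intro powr_mono) auto
    then have "2 \<le> 2 powr (\<gamma> * real n) * 2 powr (1 - \<gamma> * (real N + 1))"
      by (simp add: powr_add)
    then show ?thesis unfolding c_def by (simp add: algebra_simps)
  qed
  ultimately show ?thesis unfolding N_def by blast
qed

lemma q_gamma_len_initial_bound: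
  fixes \<gamma> C :: real
  assumes "0 < \<gamma>" "\<gamma> \<le> 1" "C \<ge> 2" "1 \<le> n" "n \<le> nat \<lfloor>1 / \<gamma>\<rfloor>"
  shows "0 \<le> q_gamma_len \<gamma> n \<and> q_gamma_len \<gamma> n * (fact n powr \<gamma> * real n) \<le> C ^ (n - 1)"
proof -
  have q: "q_gamma_len \<gamma> n = 1 / fact n"
    using assms(5) by (subst q_gamma_len.simps) simp
  have "(fact n :: real) powr \<gamma> \<le> fact n powr 1"
    using assms by (intro powr_mono) auto
  then have "real n * fact n powr \<gamma> \<le> real n * fact n"
    by (intro mult_left_mono) auto
  then have "q_gamma_len \<gamma> n * (fact n powr \<gamma> * real n) \<le> real n"
    unfolding q by (simp add: field_simps)
  also have "\<dots> \<le> 2 ^ (n - 1)"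
  proof -
    have "n \<le> 2 ^ (n - 1)" using assms(4) less_exp[of "n - 1"] by linarith
    then show ?thesis by (metis of_nat_le_iff of_nat_numeral of_nat_power)
  qed
  also have "\<dots> \<le> C ^ (n - 1)" using assms(3) by (intro power_mono) auto
  finally show ?thesis by (simp add: q)
qed

lemma q_gamma_len_weighted_bound:
  fixes \<gamma> :: real
  assumes "0 < \<gamma>" "\<gamma> \<le> 1"
  shows "\<exists>C\<ge>1. \<forall>n\<ge>1. 0 \<le> q_gamma_len \<gamma> n \<and> q_gamma_len \<gamma> n * (fact n powr \<gamma> * real n) \<le> C ^ (n - 1)"
proof -
  obtain K where K0: "K \<ge> 0"
    and K: "\<forall>n. (\<Sum>k\<in>{1..<n}. real (n choose k) powr \<gamma> / real k) \<le> K * 2 powr (\<gamma> * real n)"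
    using sum_binomial_powr_div_bigo[OF assms] by blast
  obtain c where c0: "c > 0"
    and c: "\<And>n. n > nat \<lfloor>1 / \<gamma>\<rfloor> \<Longrightarrow> c * 2 powr (\<gamma> * real n) \<le> 2 powr (\<gamma> * real n) - 2"
    using two_powr_minus_two_ge[OF assms(1)] by blast
  have N1: "1 \<le> nat \<lfloor>1 / \<gamma>\<rfloor>"
    using assms by (simp add: le_nat_iff le_floor_iff)
  define C where "C = max 2 (2 * K / c)"
  have C: "C \<ge> 2" "2 * K / c \<le> C" unfolding C_def by auto
  have "0 \<le> q_gamma_len \<gamma> n \<and> q_gamma_len \<gamma> n * (fact n powr \<gamma> * real n) \<le> C ^ (n - 1)"
    if "n \<ge> 1" for n
    using that
  proof (induction n rule: less_induct)
    case (less n)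
    show ?case
    proof (cases "n \<le> nat \<lfloor>1 / \<gamma>\<rfloor>")
      case True
      with less.prems assms C show ?thesis by (intro q_gamma_len_initial_bound) auto
    next
      case False
      define D where "D = 2 powr (\<gamma> * real n) - 2"
      have cD: "c * 2 powr (\<gamma> * real n) \<le> D" using c False unfolding D_def by simp
      moreover have "c * 2 powr (\<gamma> * real n) > 0" using c0 by simp
      ultimately have D0: "D > 0" by linarith
      define s where "s = (\<Sum>k\<in>{1..<n}. q_gamma_len \<gamma> k * q_gamma_len \<gamma> (n - k))"
      have q: "q_gamma_len \<gamma> n = s / D"
        using False unfolding s_def D_def by (subst q_gamma_len.simps) simp
      have "s \<ge> 0" unfolding s_def by (intro sum_nonneg) (use less.IH in auto)
      have "s * (fact n powr \<gamma> * real n) \<le> C ^ (n - 2) * (2 * K * 2 powr (\<gamma> * real n))"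
        unfolding s_def using C K less.IH by (intro convolution_sum_le) auto
      then have "q_gamma_len \<gamma> n * (fact n powr \<gamma> * real n) \<le> C ^ (n - 2) * (2 * K * 2 powr (\<gamma> * real n)) / D"
        unfolding q using D0 by (simp add: divide_right_mono)
      also have "\<dots> \<le> C ^ (n - 2) * (2 * K * 2 powr (\<gamma> * real n)) / (c * 2 powr (\<gamma> * real n))"
        using cD c0 C K0 D0 by (intro divide_left_mono) auto
      also have "\<dots> = C ^ (n - 2) * (2 * K / c)" by simp
      also have "\<dots> \<le> C ^ (n - 2) * C" using C by (intro mult_left_mono) auto
      also have "\<dots> = C ^ (n - 1)"
      proof -
        have "n - 1 = Suc (n - 2)" using False N1 by linarith
        then show ?thesis by (simp add: mult.commute)
      qed
      finally show ?thesis using \<open>s \<ge> 0\<close> D0 q by simp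
    qed
  qed
  then show ?thesis using C by (intro exI[of _ C]) auto
qed

theorem mainTheorem5:
  fixes \<gamma> :: real
  assumes "0 < \<gamma>" and "\<gamma> \<le> 1"
  shows "\<exists>C \<ge> 1. \<forall>A :: 'a set. finite A \<longrightarrow>
           (\<forall>w. w \<noteq> [] \<and> set w \<subseteq> A \<longrightarrow>
              \<bar>q_gamma \<gamma> w\<bar> \<le> C ^ (length w - 1) / (fact (length w)) powr \<gamma>)"
proof -
  obtain C where "C \<ge> 1"
    and C: "\<And>n. n \<ge> 1 \<Longrightarrow> 0 \<le> q_gamma_len \<gamma> n \<and> q_gamma_len \<gamma> n * (fact n powr \<gamma> * real n) \<le> C ^ (n - 1)"
    using q_gamma_len_weighted_bound[OF assms] by blast
  have "\<bar>q_gamma_len \<gamma> n\<bar> \<le> C ^ (n - 1) / fact n powr \<gamma>" if "n \<ge> 1" for n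
  proof -
    have "q_gamma_len \<gamma> n * fact n powr \<gamma> \<le> q_gamma_len \<gamma> n * (fact n powr \<gamma> * real n)"
      using C[OF that] that by (intro mult_left_mono) auto
    then show ?thesis using C[OF that] by (simp add: field_simps)
  qed
  then show ?thesis
    using \<open>C \<ge> 1\<close> by (auto simp: q_gamma_eq_q_gamma_len Suc_le_eq)
qed

end
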